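(* There is an absolute constant $\bar\epsilon>0$ with the following property. Let $T>0$, $\delta_1>0$, and let $a,b,c$ be real-valued bounded functions on $[0,T]\times\mathbb R^n\times\mathbb R^n$ such that $b(t,x,\xi)\ge\delta_1 t$, $|ac|\le\bar\epsilon\,b^2$ and $|c|\le\bar\epsilon\,b^{3/2}$ everywhere. Then there exists $\epsilon_1>0$ such that the symmetric matrix $S-\epsilon_1 t\,\mathrm{diag}(1,1,b)$ is positive semidefinite at every $(t,x,\xi)\in[0,T]\times\mathbb R^n\times\mathbb R^n$, where $$S=\frac13\begin{pmatrix}3&2a&-b\\ 2a&2(a^2+b)&-ab-3c\\ -b&-ab-3c&b^2-2ac\end{pmatrix}.$$ *)

theory Defs
  imports "HOL-Analysis.Analysis"
begin

definition psd3 :: "real^3^3 \<Rightarrow> bool" where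
  "psd3 M \<longleftrightarrow> (\<forall>v::real^3. 0 \<le> v \<bullet> (M *v v))"

definition S_mat :: "real \<Rightarrow> real \<Rightarrow> real \<Rightarrow> real^3^3" where
  "S_mat a b c = (1/3) *\<^sub>R vector [
     vector [3, 2*a, -b],
     vector [2*a, 2*(a^2 + b), -a*b - 3*c],
     vector [-b, -a*b - 3*c, b^2 - 2*a*c]]"

definition diag3 :: "real \<Rightarrow> real \<Rightarrow> real \<Rightarrow> real^3^3" where
  "diag3 d1 d2 d3 = vector [vector [d1, 0, 0], vector [0, d2, 0], vector [0, 0, d3]]"

text \<open>R^n represented as functions nat => real vanishing at indices \<ge> n.\<close>
definition Rn :: "nat \<Rightarrow> (nat \<Rightarrow> real) set" where
  "Rn n = {x. \<forall>i\<ge>n. x i = 0}"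

end

theory Submission
  imports Defs
begin

text \<open>Writing \<open>u = x + a y - b z\<close>, three times the quadratic form of \<open>S\<close> equals
  \<open>u\<^sup>2 + x\<^sup>2 + (x + a y)\<^sup>2 + 2 b y\<^sup>2 - 6 c y z - 2 a c z\<^sup>2\<close>. Since \<open>b z = (x + a y) - u\<close>,
  the squares control \<open>b\<^sup>2 z\<^sup>2 / 2\<close>; the smallness of \<open>a c\<close> and \<open>c\<close> relative to \<open>b\<^sup>2\<close> and \<open>b\<^sup>3\<^sup>/\<^sup>2\<close>
  lets these squares together with \<open>2 b y\<^sup>2\<close> absorb the two cross terms. This leaves a
  lower bound \<open>x\<^sup>2 + b y\<^sup>2 + b\<^sup>2 z\<^sup>2 / 5\<close>, which dominates \<open>\<epsilon> (x\<^sup>2 + y\<^sup>2 + b z\<^sup>2)\<close> as soon as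
  \<open>\<epsilon> \<le> 1/15\<close> and \<open>\<epsilon> \<le> b/15\<close>. So \<open>\<epsilon>\<^bsub>bar\<^esub> = 1/10\<close> works, with \<open>\<epsilon>\<^sub>1 = min \<delta>\<^sub>1 (1/T) / 15\<close>:
  on \<open>[0,T]\<close> we have \<open>\<epsilon>\<^sub>1 t \<le> 1/15\<close> and \<open>15 \<epsilon>\<^sub>1 t \<le> \<delta>\<^sub>1 t \<le> b\<close>.\<close>

definition S_form :: "real \<Rightarrow> real \<Rightarrow> real \<Rightarrow> real \<Rightarrow> real \<Rightarrow> real \<Rightarrow> real" where
  "S_form a b c x y z = 3*x^2 + 4*a*x*y - 2*b*x*z + 2*(a^2 + b)*y^2
     - 2*(a*b + 3*c)*y*z + (b^2 - 2*a*c)*z^2"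

lemma inner_S_mat_mult:
  "v \<bullet> (S_mat a b c *v v) = S_form a b c (v$1) (v$2) (v$3) / 3"
  unfolding S_mat_def S_form_def
  by (simp add: inner_vec_def matrix_vector_mult_def sum_3 power2_eq_square field_simps)

lemma inner_diag3_mult:
  "v \<bullet> (diag3 d1 d2 d3 *v v) = d1 * (v$1)^2 + d2 * (v$2)^2 + d3 * (v$3)^2"
  unfolding diag3_def
  by (simp add: inner_vec_def matrix_vector_mult_def sum_3 power2_eq_square algebra_simps)

lemma S_form_eq_sum_squares:
  "S_form a b c x y z =
     (x + a*y - b*z)^2 + x^2 + (x + a*y)^2 + 2*b*y^2 - 6*c*y*z - 2*a*c*z^2"
  unfolding S_form_def by (simp add: power2_eq_square algebra_simps)

lemma powr_three_halves: "0 \<le> (b::real) \<Longrightarrow> b powr (3/2) = b * sqrt b"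
  by (cases "b = 0") (simp_all add: powr_add[of b 1 "1/2", simplified] powr_half_sqrt)

lemma S_form_lower_bound:
  fixes a b c x y z :: real
  assumes b: "0 \<le> b" and ac: "\<bar>a*c\<bar> \<le> b^2/10" and c: "\<bar>c\<bar> \<le> b * sqrt b / 10"
  shows "x^2 + b*y^2 + b^2*z^2/5 \<le> S_form a b c x y z"
proof -
  have squares: "b^2*z^2/2 \<le> (x + a*y - b*z)^2 + (x + a*y)^2"
  proof -
    have "b^2*z^2 = ((x + a*y) - (x + a*y - b*z))^2"
      by (simp add: power_mult_distrib)
    also have "\<dots> \<le> 2*((x + a*y - b*z)^2 + (x + a*y)^2)"
      using zero_le_power2[of "(x + a*y) + (x + a*y - b*z)"]
      by (simp add: power2_eq_square algebra_simps)
    finally show ?thesis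
      by simp
  qed
  have ac_term: "2*a*c*z^2 \<le> b^2*z^2/5"
  proof -
    have "2*a*c*z^2 \<le> 2*\<bar>a*c\<bar>*z^2"
      by (simp add: mult_right_mono)
    also have "\<dots> \<le> 2*(b^2/10)*z^2"
      using mult_right_mono[OF ac zero_le_power2[of z]] by simp
    finally show ?thesis by simp
  qed
  have c_term: "6*c*y*z \<le> b*y^2 + (9/100)*b^2*z^2"
  proof -
    have "6*c*y*z \<le> 6*\<bar>c\<bar>*\<bar>y\<bar>*\<bar>z\<bar>"
      using abs_ge_self[of "c*y*z"] by (simp add: abs_mult)
    also have "\<dots> \<le> 2*(sqrt b*\<bar>y\<bar>)*((3/10)*b*\<bar>z\<bar>)"
      using mult_right_mono[OF mult_right_mono[OF c abs_ge_zero[of y]] abs_ge_zero[of z]]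
      by (simp add: algebra_simps)
    also have "\<dots> \<le> (sqrt b*\<bar>y\<bar>)^2 + ((3/10)*b*\<bar>z\<bar>)^2"
      by (rule sum_squares_bound)
    also have "\<dots> = b*y^2 + (9/100)*b^2*z^2"
      using b by (simp add: power_mult_distrib power_divide)
    finally show ?thesis .
  qed
  have "0 \<le> b^2*z^2"
    by simp
  then show ?thesis
    unfolding S_form_eq_sum_squares
    using squares ac_term c_term by linarith
qed

lemma psd3_S_mat_minus_diag3:
  fixes a b c \<epsilon> :: real
  assumes "0 \<le> \<epsilon>" "\<epsilon> \<le> 1/15" "\<epsilon> \<le> b/15"
    and "\<bar>a*c\<bar> \<le> b^2/10" "\<bar>c\<bar> \<le> b powr (3/2) / 10"
  shows "psd3 (S_mat a b c - \<epsilon> *\<^sub>R diag3 1 1 b)"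
  unfolding psd3_def
proof
  fix v :: "real^3"
  define x y z where xyz: "x = v$1" "y = v$2" "z = v$3"
  have b: "0 \<le> b"
    using assms(1,3) by linarith
  have "x^2 + b*y^2 + b^2*z^2/5 \<le> S_form a b c x y z"
    using assms(4,5) b by (intro S_form_lower_bound) (simp_all add: powr_three_halves)
  moreover have "\<epsilon>*x^2 \<le> x^2/15" "\<epsilon>*y^2 \<le> b*y^2/15" "\<epsilon>*(b*z^2) \<le> b^2*z^2/15"
    using mult_right_mono[OF assms(2) zero_le_power2[of x]]
      mult_right_mono[OF assms(3) zero_le_power2[of y]]
      mult_right_mono[OF assms(3) mult_nonneg_nonneg[OF b zero_le_power2[of z]]]
    by (simp_all add: power2_eq_square)
  moreover have "0 \<le> x^2" "0 \<le> b*y^2" "0 \<le> b^2*z^2"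
    using b by simp_all
  ultimately have "\<epsilon>*x^2 + \<epsilon>*y^2 + \<epsilon>*(b*z^2) \<le> S_form a b c x y z / 3"
    by linarith
  then show "0 \<le> v \<bullet> ((S_mat a b c - \<epsilon> *\<^sub>R diag3 1 1 b) *v v)"
    by (simp add: matrix_vector_mult_diff_rdistrib inner_diff_right
        scaleR_matrix_vector_assoc[symmetric] inner_S_mat_mult inner_diag3_mult
        algebra_simps flip: xyz)
qed

theorem mainTheorem4:
  shows "\<exists>eps_bar::real. eps_bar > 0 \<and>
    (\<forall>(n::nat) (T::real) (\<delta>1::real)
        (a::real \<Rightarrow> (nat \<Rightarrow> real) \<Rightarrow> (nat \<Rightarrow> real) \<Rightarrow> real) b c.
      T > 0 \<longrightarrow> \<delta>1 > 0 \<longrightarrow>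
      (\<exists>K. \<forall>t\<in>{0..T}. \<forall>x\<in>Rn n. \<forall>\<xi>\<in>Rn n.
          \<bar>a t x \<xi>\<bar> \<le> K \<and> \<bar>b t x \<xi>\<bar> \<le> K \<and> \<bar>c t x \<xi>\<bar> \<le> K) \<longrightarrow>
      (\<forall>t\<in>{0..T}. \<forall>x\<in>Rn n. \<forall>\<xi>\<in>Rn n.
          b t x \<xi> \<ge> \<delta>1 * t \<and>
          \<bar>a t x \<xi> * c t x \<xi>\<bar> \<le> eps_bar * (b t x \<xi>)^2 \<and>
          \<bar>c t x \<xi>\<bar> \<le> eps_bar * (b t x \<xi>) powr (3/2)) \<longrightarrow>
      (\<exists>eps1::real. eps1 > 0 \<and>
        (\<forall>t\<in>{0..T}. \<forall>x\<in>Rn n. \<forall>\<xi>\<in>Rn n.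
          psd3 (S_mat (a t x \<xi>) (b t x \<xi>) (c t x \<xi>)
                - (eps1 * t) *\<^sub>R diag3 1 1 (b t x \<xi>)))))"
proof (rule exI[of _ "1/10"], intro conjI allI impI)
  fix n :: nat and T \<delta>1 :: real and a b c :: "real \<Rightarrow> (nat \<Rightarrow> real) \<Rightarrow> (nat \<Rightarrow> real) \<Rightarrow> real"
  assume T: "T > 0" and \<delta>1: "\<delta>1 > 0"
    and hyps: "\<forall>t\<in>{0..T}. \<forall>x\<in>Rn n. \<forall>\<xi>\<in>Rn n. b t x \<xi> \<ge> \<delta>1 * t \<and>
      \<bar>a t x \<xi> * c t x \<xi>\<bar> \<le> 1/10 * (b t x \<xi>)^2 \<and>
      \<bar>c t x \<xi>\<bar> \<le> 1/10 * (b t x \<xi>) powr (3/2)"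
  define eps1 where "eps1 = min \<delta>1 (1/T) / 15"
  have "eps1 > 0"
    using T \<delta>1 by (simp add: eps1_def)
  show "\<exists>eps1>0. \<forall>t\<in>{0..T}. \<forall>x\<in>Rn n. \<forall>\<xi>\<in>Rn n.
    psd3 (S_mat (a t x \<xi>) (b t x \<xi>) (c t x \<xi>) - (eps1 * t) *\<^sub>R diag3 1 1 (b t x \<xi>))"
  proof (intro exI[of _ eps1] conjI ballI)
    show "eps1 > 0" by fact
  next
    fix t x \<xi> assume t: "t \<in> {0..T}" and "x \<in> Rn n" "\<xi> \<in> Rn n"
    then have hyps_at: "\<delta>1 * t \<le> b t x \<xi>" "\<bar>a t x \<xi> * c t x \<xi>\<bar> \<le> (b t x \<xi>)^2 / 10"
      "\<bar>c t x \<xi>\<bar> \<le> (b t x \<xi>) powr (3/2) / 10"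
      using hyps by auto
    have "eps1 * t \<le> \<delta>1 * t / 15" "eps1 * t \<le> t / T / 15"
      using t mult_right_mono[OF min.cobounded1, of t \<delta>1 "1/T"]
        mult_right_mono[OF min.cobounded2, of t \<delta>1 "1/T"]
      by (auto simp: eps1_def)
    moreover have "t / T \<le> 1"
      using t T by simp
    moreover have "0 \<le> eps1 * t"
      using t \<open>eps1 > 0\<close> by simp
    ultimately show "psd3 (S_mat (a t x \<xi>) (b t x \<xi>) (c t x \<xi>) - (eps1 * t) *\<^sub>R diag3 1 1 (b t x \<xi>))"
      using hyps_at by (intro psd3_S_mat_minus_diag3) auto
  qed
qed simp

end
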